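(* Let $R$ be a ring with unity and involution $*$, let $a,v\in R$, and let $m,n$ be nonnegative integers with $m+n\geq 1$. Then (1) $a$ is left invertible if and only if $a$ is left dual $(1,1)$-core invertible; (2) $a$ is left dual pseudo core invertible if and only if $a^m$ is left dual $(a^k,a^n)$-core invertible for some positive integer $k$; (3) $a$ is left dual core invertible if and only if $a^m$ is left dual $(a,a^n)$-core invertible; (4) $a$ is left dual $v$-core invertible if and only if $v$ is left dual $(a,a)$-core invertible.
   Context: Here $a^0=1$. For $a,b,c\in R$, $a$ is left dual $(b,c)$-core invertible if there exists $x\in Rc$ such that $bxab=b$ and $(xab)^*=xab$. An element $a$ is left dual pseudo core invertible if there exist $x\in R$ and a positive integer $k$ such that $a^kxa=a^k$, $(xa)^*=xa$ and $x^2a=x$; it is left dual core invertible if there exists $x\in R$ with $axa=a$, $(xa)^*=xa$ and $x^2a=x$. For $a,v\in R$, $a$ is left dual $v$-core invertible if there exists $x\in R$ such that $axva=a$, $(xva)^*=xva$ and $x^2va=x$. *)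

theory Defs
  imports Main
begin

definition involution :: "('a::ring_1 \<Rightarrow> 'a) \<Rightarrow> bool" where
  "involution s \<longleftrightarrow> (\<forall>x. s (s x) = x) \<and> (\<forall>x y. s (x + y) = s x + s y)
     \<and> (\<forall>x y. s (x * y) = s y * s x)"

definition left_invertible :: "'a::ring_1 \<Rightarrow> bool" where
  "left_invertible a \<longleftrightarrow> (\<exists>x. x * a = 1)"

definition left_dual_bc_core_inv :: "('a::ring_1 \<Rightarrow> 'a) \<Rightarrow> 'a \<Rightarrow> 'a \<Rightarrow> 'a \<Rightarrow> bool" where
  "left_dual_bc_core_inv s a b c \<longleftrightarrow>
     (\<exists>x. (\<exists>r. x = r * c) \<and> b * x * a * b = b \<and> s (x * a * b) = x * a * b)"

definition left_dual_pseudo_core_inv :: "('a::ring_1 \<Rightarrow> 'a) \<Rightarrow> 'a \<Rightarrow> bool" where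
  "left_dual_pseudo_core_inv s a \<longleftrightarrow>
     (\<exists>x k. k > (0::nat) \<and> a ^ k * x * a = a ^ k \<and> s (x * a) = x * a \<and> x ^ 2 * a = x)"

definition left_dual_core_inv :: "('a::ring_1 \<Rightarrow> 'a) \<Rightarrow> 'a \<Rightarrow> bool" where
  "left_dual_core_inv s a \<longleftrightarrow>
     (\<exists>x. a * x * a = a \<and> s (x * a) = x * a \<and> x ^ 2 * a = x)"

definition left_dual_v_core_inv :: "('a::ring_1 \<Rightarrow> 'a) \<Rightarrow> 'a \<Rightarrow> 'a \<Rightarrow> bool" where
  "left_dual_v_core_inv s a v \<longleftrightarrow>
     (\<exists>x. a * x * v * a = a \<and> s (x * v * a) = x * v * a \<and> x ^ 2 * v * a = x)"

end

theory Submission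
  imports Defs
begin

text \<open>Every equivalence is witnessed explicitly; the involution enters only through s 1 = 1.
  The relation x^2 a = x gives x = x^(j+1) a^j for all j. Hence a left dual pseudo core inverse x
  of index k yields y = x^(m+k), which lies in R a^n and satisfies y a^m a^k = x a, so it is a left
  dual (a^k, a^n)-core inverse of a^m. Conversely, from such a y in R a^n the element
  x = y a^(m+k-1) satisfies x a = y a^m a^k and, because m + n \<ge> 1, lies in R a^k; therefore
  x^2 a = x (x a) = x. The core inverse is the case k = 1, and the v-core case is the same argument
  with x = (x x v) a in R a.\<close>

lemma involution_one:
  assumes "involution s"
  shows "s 1 = (1::'a::ring_1)"
proof -
  have "s 1 = s 1 * s (s 1)"
    using assms unfolding involution_def by (metis mult_1_left)
  then show ?thesis
    using assms unfolding involution_def by (metis mult_1_right)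
qed

lemma left_invertible_iff_left_dual_bc_core_inv_one_one:
  assumes "involution s"
  shows "left_invertible a \<longleftrightarrow> left_dual_bc_core_inv s a 1 1"
  using involution_one[OF assms]
  unfolding left_invertible_def left_dual_bc_core_inv_def by auto

lemma power_Suc_mult_power_eq_self:
  fixes x a :: "'a::monoid_mult"
  assumes "x ^ 2 * a = x"
  shows "x ^ Suc j * a ^ j = x"
proof (induction j)
  case 0
  then show ?case by simp
next
  case (Suc j)
  have "x ^ Suc (Suc j) * a ^ Suc j = x * (x ^ Suc j * a ^ j) * a"
    by (simp add: mult.assoc power_commutes)
  also have "\<dots> = x" using Suc assms by (simp add: power2_eq_square mult.assoc)
  finally show ?case .
qed

lemma power_mult_power_eq:
  fixes x a :: "'a::monoid_mult"
  assumes "x ^ 2 * a = x" and "j > 0"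
  shows "x ^ j * a ^ j = x * a"
proof -
  obtain i where j: "j = Suc i" using \<open>j > 0\<close> gr0_implies_Suc by blast
  have "x ^ j * a ^ j = (x ^ Suc i * a ^ i) * a"
    by (simp only: j power_Suc2 mult.assoc)
  then show ?thesis using power_Suc_mult_power_eq_self[OF assms(1)] by simp
qed

lemma left_dual_bc_core_inv_powI:
  fixes x a :: "'a::ring_1"
  assumes "k > 0" and "a ^ k * x * a = a ^ k" and "s (x * a) = x * a" and "x ^ 2 * a = x"
  shows "left_dual_bc_core_inv s (a ^ m) (a ^ k) (a ^ n)"
proof -
  define y where "y = x ^ (m + k)"
  obtain i where i: "m + k = Suc i" using \<open>k > 0\<close> by (metis add_gr_0 gr0_implies_Suc)
  have "y = x ^ i * (x ^ Suc n * a ^ n)"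
    using power_Suc_mult_power_eq_self[OF assms(4)] by (simp add: y_def i power_Suc2 power_commutes)
  then have y_in: "y = x ^ (i + Suc n) * a ^ n"
    by (simp only: mult.assoc[symmetric] power_add)
  have ya: "y * a ^ m * a ^ k = x * a"
    using power_mult_power_eq[OF assms(4), of "m + k"] \<open>k > 0\<close>
    by (simp add: y_def mult.assoc power_add)
  show ?thesis
    unfolding left_dual_bc_core_inv_def
    using y_in ya assms(2,3) by (metis mult.assoc)
qed

lemma left_dual_bc_core_inv_powD:
  fixes a :: "'a::ring_1"
  assumes "k > 0" and "m + n \<ge> 1" and "left_dual_bc_core_inv s (a ^ m) (a ^ k) (a ^ n)"
  obtains x where "a ^ k * x * a = a ^ k" and "s (x * a) = x * a" and "x ^ 2 * a = x"
proof -
  obtain y r where y_in: "y = r * a ^ n" and inner: "a ^ k * y * a ^ m * a ^ k = a ^ k"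
    and sym: "s (y * a ^ m * a ^ k) = y * a ^ m * a ^ k"
    using assms(3) unfolding left_dual_bc_core_inv_def by blast
  define x where "x = y * a ^ (m + k - 1)"
  have xa: "x * a = y * a ^ m * a ^ k"
    using \<open>k > 0\<close> by (simp add: x_def mult.assoc power_add[symmetric] power_Suc2[symmetric])
  have x_in: "x = r * a ^ (n + m - 1) * a ^ k"
    using assms(1,2) by (simp add: x_def y_in mult.assoc power_add[symmetric] algebra_simps)
  have "x ^ 2 * a = r * a ^ (n + m - 1) * (a ^ k * y * a ^ m * a ^ k)"
    using xa x_in by (simp add: power2_eq_square mult.assoc)
  also have "\<dots> = x" using inner x_in by simp
  finally have "x ^ 2 * a = x" .
  with xa inner sym show ?thesis
    by (intro that) (simp_all add: mult.assoc)
qed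

lemma left_dual_v_core_inv_iff_left_dual_bc_core_inv:
  fixes a v :: "'a::ring_1"
  shows "left_dual_v_core_inv s a v \<longleftrightarrow> left_dual_bc_core_inv s v a a"
proof
  assume "left_dual_v_core_inv s a v"
  then obtain x where x: "a * x * v * a = a" "s (x * v * a) = x * v * a" "x ^ 2 * v * a = x"
    unfolding left_dual_v_core_inv_def by blast
  have "x = (x * x * v) * a" using x(3) by (simp add: power2_eq_square mult.assoc)
  then show "left_dual_bc_core_inv s v a a"
    unfolding left_dual_bc_core_inv_def using x(1,2) by blast
next
  assume "left_dual_bc_core_inv s v a a"
  then obtain y r where y: "y = r * a" "a * y * v * a = a" "s (y * v * a) = y * v * a"
    unfolding left_dual_bc_core_inv_def by blast
  have "y ^ 2 * v * a = r * (a * y * v * a)" using y(1) by (simp add: power2_eq_square mult.assoc)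
  also have "\<dots> = y" using y(1,2) by simp
  finally show "left_dual_v_core_inv s a v"
    unfolding left_dual_v_core_inv_def using y(2,3) by blast
qed

theorem theorem3p1:
  fixes s :: "'a::ring_1 \<Rightarrow> 'a" and a v :: 'a and m n :: nat
  assumes "involution s" and "m + n \<ge> 1"
  shows "(left_invertible a \<longleftrightarrow> left_dual_bc_core_inv s a 1 1)
    \<and> (left_dual_pseudo_core_inv s a \<longleftrightarrow>
         (\<exists>k::nat. k > 0 \<and> left_dual_bc_core_inv s (a ^ m) (a ^ k) (a ^ n)))
    \<and> (left_dual_core_inv s a \<longleftrightarrow> left_dual_bc_core_inv s (a ^ m) a (a ^ n))
    \<and> (left_dual_v_core_inv s a v \<longleftrightarrow> left_dual_bc_core_inv s v a a)"
proof (intro conjI)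
  show "left_invertible a \<longleftrightarrow> left_dual_bc_core_inv s a 1 1"
    using left_invertible_iff_left_dual_bc_core_inv_one_one[OF assms(1)] .
  show "left_dual_pseudo_core_inv s a \<longleftrightarrow>
      (\<exists>k::nat. k > 0 \<and> left_dual_bc_core_inv s (a ^ m) (a ^ k) (a ^ n))"
    unfolding left_dual_pseudo_core_inv_def
    using left_dual_bc_core_inv_powI left_dual_bc_core_inv_powD[OF _ assms(2)] by metis
  show "left_dual_core_inv s a \<longleftrightarrow> left_dual_bc_core_inv s (a ^ m) a (a ^ n)"
    unfolding left_dual_core_inv_def
    using left_dual_bc_core_inv_powI[of 1 a] left_dual_bc_core_inv_powD[of 1 m n s a] assms(2)
    by (metis power_one_right zero_less_one)
  show "left_dual_v_core_inv s a v \<longleftrightarrow> left_dual_bc_core_inv s v a a"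
    using left_dual_v_core_inv_iff_left_dual_bc_core_inv .
qed

end
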